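(* Let $I$ and $J$ be finite sets, $g\in\mathbb{R}^J$, and for each $i\in I$ let $u_i:\mathbb{R}^J\to\mathbb{R}\cup\{-\infty\}$ be upper semicontinuous and concave with $u_i(x_i+rg)>u_i(x_i)$ for all $x_i\in\mathrm{dom}\,u_i$ and $r>0$. Assume: (A) whenever $x\in\mathbb{R}^{I\times J}$ satisfies $u_i^\infty(x_i)\ge0$ for all $i$ and $\sum_{i}x_i=0$, then $x=0$; (B) for every $r>0$ and every $i\in I$ there exists $\delta_i>0$ with $u_i(x_i+rg)\ge u_i(x_i)+\delta_i r$ for all $x_i\in\mathbb{B}(r)$. Let $x^0\in\mathbb{R}^{I\times J}$ be an initial allocation and let $(x^t)_{t\ge0}$ be generated by repeated double auctions: for $t\ge1$, with $D^t_i(y_i):=\sup\{r\in\mathbb{R}\mid u_i(x^{t-1}_i+y_i-rg)\ge u_i(x^{t-1}_i)\}$, let $\bar x^t\in\mathbb{R}^{I\times J}$ solve "maximize $\sum_i D^t_i(y_i)$ subject to $\sum_i y_i=0$", let $p^t\in\mathbb{R}^J$ satisfy $p^t\in\partial D^t_i(\bar x^t_i)$ for all $i\in I$, and set $x^t_i:=x^{t-1}_i+\bar x^t_i-(p^t\cdot\bar x^t_i)g$. Then: the sequence $(x^t)$ is bounded; $CS(x^t)$ is nonincreasing in $t$ and converges to zero; there is $r>0$ such that, with $\delta_i$ the constants given by (B) for this $r$, \[ CS(x^t)\le\frac1t\sum_{i\in I}\frac{u_i(x^t_i)-u_i(x^0_i)}{\delta_i}\quad\text{for all }t\ge1; \]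 and every cluster point $\bar x$ of $(x^t)_{t=0}^\infty$ is a double auction equilibrium and individually rational. If moreover each $u_i$ satisfies: whenever $u_i(y_i)>u_i(y_i')$ for some $y_i'\in\mathrm{dom}\,u_i$, then $y_i-\varepsilon g\in\mathrm{dom}\,u_i$ for all small enough $\varepsilon>0$, then every such cluster point $\bar x$ is Pareto efficient.
   Context: $\mathrm{dom}\,u_i=\{x\mid u_i(x)>-\infty\}$; $u_i^\infty(x_i):=\inf_{\alpha>0}\frac{u_i(\bar x_i+\alpha x_i)-u_i(\bar x_i)}{\alpha}$ for any $\bar x_i\in\mathrm{dom}\,u_i$ is the recession function; $\mathbb{B}(r)$ is the closed ball of radius $r$ at the origin in $\mathbb{R}^J$; $\partial D(\bar y)$ is the superdifferential $\{p\mid D(y)\le D(\bar y)+p\cdot(y-\bar y)\ \forall y\}$. For an allocation $x$, $CS(x)$ is the optimal value of "maximize $\sum_i D_i(y_i)$ over $y\in\mathbb{R}^{I\times J}$ subject to $\sum_i y_i=0$" where $D_i(y_i)=\sup\{r\mid u_i(x_i+y_i-rg)\ge u_i(x_i)\}$; $x$ is a double auction equilibrium if $CS(x)=0$. An allocation $\bar x$ is individually rational if $u_i(\bar x_i)\ge u_i(x^0_i)$ for all $i$. An allocation is feasible if its total equals $\sum_i x^0_i$, and a feasible $\bar x$ is Pareto efficient if no feasible $x'$ has $u_i(x'_i)\ge u_i(\bar x_i)$ for all $i$ with strict inequality for some $i$. *)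

theory Defs
  imports "HOL-Analysis.Analysis"
begin

text \<open>Utilities take values in the extended reals; the value \<open>-\<infinity>\<close> is allowed,
  \<open>+\<infinity>\<close> is excluded by an explicit hypothesis in the theorem.\<close>

definition usc :: "('a::topological_space \<Rightarrow> ereal) \<Rightarrow> bool" where
  "usc f \<longleftrightarrow> (\<forall>x. Limsup (at x) f \<le> f x)"

definition ext_concave :: "('a::real_vector \<Rightarrow> ereal) \<Rightarrow> bool" where
  "ext_concave f \<longleftrightarrow> (\<forall>x y (l::real). 0 < l \<and> l < 1 \<longrightarrow>
      ereal l * f x + ereal (1 - l) * f y \<le> f (l *\<^sub>R x + (1 - l) *\<^sub>R y))"

definition edom :: "('a \<Rightarrow> ereal) \<Rightarrow> 'a set" where
  "edom f = {x. f x > -\<infinity>}"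

definition recession :: "('a::real_vector \<Rightarrow> ereal) \<Rightarrow> 'a \<Rightarrow> ereal" where
  "recession f x = (let xb = (SOME xb. xb \<in> edom f) in
      (INF \<alpha>\<in>{\<alpha>::real. \<alpha> > 0}. (f (xb + \<alpha> *\<^sub>R x) - f xb) / ereal \<alpha>))"

definition Dfun :: "'a::real_vector \<Rightarrow> ('a \<Rightarrow> ereal) \<Rightarrow> 'a \<Rightarrow> 'a \<Rightarrow> ereal" where
  "Dfun g f xi yi = Sup {ereal r | r. f (xi + yi - r *\<^sub>R g) \<ge> f xi}"

definition superdiff :: "('a::real_inner \<Rightarrow> ereal) \<Rightarrow> 'a \<Rightarrow> 'a set" where
  "superdiff D yb = {p. \<forall>y. D y \<le> D yb + ereal (p \<bullet> (y - yb))}"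

text \<open>Allocations are elements of \<open>real^'j^'i\<close>, agent \<open>i\<close> holding \<open>x $ i\<close>.\<close>
definition CS :: "real^'j \<Rightarrow> ('i::finite \<Rightarrow> real^'j \<Rightarrow> ereal) \<Rightarrow> real^'j^'i \<Rightarrow> ereal" where
  "CS g u x = Sup {(\<Sum>i\<in>UNIV. Dfun g (u i) (x $ i) (y $ i)) | y::real^'j^'i. (\<Sum>i\<in>UNIV. y $ i) = 0}"

definition DA_equilibrium :: "real^'j \<Rightarrow> ('i::finite \<Rightarrow> real^'j \<Rightarrow> ereal) \<Rightarrow> real^'j^'i \<Rightarrow> bool" where
  "DA_equilibrium g u x \<longleftrightarrow> CS g u x = 0"

definition indiv_rational :: "('i::finite \<Rightarrow> real^'j \<Rightarrow> ereal) \<Rightarrow> real^'j^'i \<Rightarrow> real^'j^'i \<Rightarrow> bool" where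
  "indiv_rational u x0 xb \<longleftrightarrow> (\<forall>i. u i (xb $ i) \<ge> u i (x0 $ i))"

definition feasible :: "real^'j^'i::finite \<Rightarrow> real^'j^'i \<Rightarrow> bool" where
  "feasible x0 x \<longleftrightarrow> (\<Sum>i\<in>UNIV. x $ i) = (\<Sum>i\<in>UNIV. x0 $ i)"

definition pareto_efficient :: "('i::finite \<Rightarrow> real^'j \<Rightarrow> ereal) \<Rightarrow> real^'j^'i \<Rightarrow> real^'j^'i \<Rightarrow> bool" where
  "pareto_efficient u x0 xb \<longleftrightarrow> feasible x0 xb \<and>
     \<not> (\<exists>x'. feasible x0 x' \<and> (\<forall>i. u i (x' $ i) \<ge> u i (xb $ i)) \<and> (\<exists>i. u i (x' $ i) > u i (xb $ i)))"

end

(* Each round is individually rational (an agent pays at most its reservation price D, which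
   is attained because u_i is upper semicontinuous) and preserves the total endowment, so the
   iterates stay in the closed convex set of feasible allocations that every agent weakly prefers
   to x^0.  Assumption (A) says that this set has no direction of recession, hence it is bounded.
   In the round following x^t, agent i pays p . xbar_i although it would accept to pay D(xbar_i);
   the difference, its surplus, is received as a multiple of g, and the surpluses add up to
   CS(x^t) since prices vanish on the balanced trade xbar.  By (B) and concavity a surplus s
   raises u_i by at least delta_i s, and CS can only decrease along utility-improving
   reallocations, so summing over the rounds gives
   t CS(x^t) <= sum_i (u_i(x^t_i) - u_i(x^0_i)) / delta_i.  A cluster point has the same total
   and dominates every x^t in utility, so CS vanishes there, and a Pareto improvement of it would
   create a positive surplus. *)

theory Submission
  imports Defs
begin

section \<open>Upper semicontinuous concave functions\<close>

lemma usc_closed_superlevel: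
  assumes "usc f"
  shows "closed {z. c \<le> f z}"
proof -
  have "open (- {z. c \<le> f z})"
  proof (subst open_subopen, intro ballI)
    fix z assume "z \<in> - {z. c \<le> f z}"
    then have "f z < c" by auto
    then have "Limsup (at z) f < c" using assms unfolding usc_def by (meson le_less_trans)
    then have "eventually (\<lambda>y. f y < c) (at z)" by (rule Limsup_lessD)
    then obtain T where T: "open T" "z \<in> T" "\<And>y. y \<in> T \<Longrightarrow> y \<noteq> z \<Longrightarrow> f y < c"
      unfolding eventually_at_topological by blast
    have "T \<subseteq> - {z. c \<le> f z}"
    proof
      fix y assume "y \<in> T"
      then have "f y < c" using T(3) \<open>f z < c\<close> by (cases "y = z") auto
      then show "y \<in> - {z. c \<le> f z}" by simp
    qed
    with T(1,2) show "\<exists>T. open T \<and> z \<in> T \<and> T \<subseteq> - {z. c \<le> f z}" by blast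
  qed
  then show ?thesis by (simp add: closed_def)
qed

lemma usc_tendsto_ge:
  assumes "usc f" "z \<longlonglongrightarrow> l" "eventually (\<lambda>n. c \<le> f (z n)) sequentially"
  shows "c \<le> f l"
proof -
  have "l \<in> {z. c \<le> f z}"
    by (rule Lim_in_closed_set[OF usc_closed_superlevel[OF assms(1)] _ _ assms(2)]) (use assms(3) in auto)
  then show ?thesis by simp
qed

lemma ext_concaveD:
  assumes "ext_concave f" "f a = ereal A" "f b = ereal B" "0 < l" "l < 1"
  shows "ereal (l * A + (1 - l) * B) \<le> f (l *\<^sub>R a + (1 - l) *\<^sub>R b)"
  using assms unfolding ext_concave_def by (metis times_ereal.simps(1) plus_ereal.simps(1))

lemma ext_concave_convex_superlevel:
  assumes "ext_concave f"
  shows "convex {z. ereal c \<le> f z}"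
proof (rule convexI, clarsimp)
  fix x y and a b :: real
  assume x: "ereal c \<le> f x" and y: "ereal c \<le> f y" and "0 \<le> a" "0 \<le> b" "a + b = 1"
  consider "a = 0" | "b = 0" | "0 < a" "a < 1" "b = 1 - a" using \<open>0 \<le> a\<close> \<open>0 \<le> b\<close> \<open>a + b = 1\<close> by linarith
  then show "ereal c \<le> f (a *\<^sub>R x + b *\<^sub>R y)"
  proof cases
    case 3
    have "ereal c = ereal a * ereal c + ereal (1 - a) * ereal c" by (simp flip: distrib_right)
    also have "\<dots> \<le> ereal a * f x + ereal (1 - a) * f y"
      using 3 x y by (intro add_mono ereal_mult_left_mono) auto
    also have "\<dots> \<le> f (a *\<^sub>R x + b *\<^sub>R y)" using assms 3 unfolding ext_concave_def by blast
    finally show ?thesis .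
  qed (use x y \<open>a + b = 1\<close> in auto)
qed

lemma ereal_lower_boundedE:
  assumes "ereal C \<le> v" "v \<noteq> \<infinity>"
  obtains V where "v = ereal V" "C \<le> V"
  using assms by (cases v) auto

lemma edom_finiteE:
  assumes "z \<in> edom f" "f z \<noteq> \<infinity>"
  obtains V where "f z = ereal V"
  using assms unfolding edom_def by (cases "f z") auto

lemma edom_if_le: "a \<in> edom f \<Longrightarrow> f a \<le> f b \<Longrightarrow> b \<in> edom f"
  unfolding edom_def by (auto intro: less_le_trans)

lemma ext_concave_ray_bounded_below_imp_le:
  assumes conc: "ext_concave f" and npinf: "\<And>z. f z \<noteq> \<infinity>" and a: "a \<in> edom f"
    and bdd: "\<And>R. 0 \<le> R \<Longrightarrow> ereal C \<le> f (a + R *\<^sub>R d)"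
  shows "f a \<le> f (a + d)"
proof -
  obtain A where A: "f a = ereal A" using edom_finiteE[OF a npinf] .
  obtain F where F: "f (a + d) = ereal F" using bdd[of 1] npinf by (auto elim: ereal_lower_boundedE)
  have bound: "A - (A - C) / k \<le> F" if "1 < k" for k
  proof -
    have "ereal C \<le> f (a + k *\<^sub>R d)" using bdd that by simp
    then obtain K where K: "f (a + k *\<^sub>R d) = ereal K" "C \<le> K"
      using npinf by (blast elim: ereal_lower_boundedE)
    have "ereal ((1/k) * K + (1 - 1/k) * A) \<le> f ((1/k) *\<^sub>R (a + k *\<^sub>R d) + (1 - 1/k) *\<^sub>R a)"
      by (rule ext_concaveD[OF conc K(1) A]) (use that in auto)
    also have "(1/k) *\<^sub>R (a + k *\<^sub>R d) + (1 - 1/k) *\<^sub>R a = a + d"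
      using that by (simp add: algebra_simps)
    finally have "(1/k) * K + (1 - 1/k) * A \<le> F" using F by simp
    moreover have "(1/k) * C \<le> (1/k) * K" using K(2) that by (simp add: divide_right_mono)
    ultimately show ?thesis using that by (simp add: field_simps)
  qed
  have "A - (A - C) * inverse (real (Suc (Suc n))) \<le> F" for n
    using bound[of "real (Suc (Suc n))"] by (simp add: divide_inverse)
  moreover have "(\<lambda>n. A - (A - C) * inverse (real (Suc (Suc n)))) \<longlonglongrightarrow> A - (A - C) * 0"
    by (intro tendsto_intros LIMSEQ_Suc[OF LIMSEQ_inverse_real_of_nat])
  ultimately have "A \<le> F" by (simp add: LIMSEQ_le_const2)
  then show ?thesis using A F by simp
qed

lemma ext_concave_increment_interpolate:
  assumes conc: "ext_concave f" and npinf: "\<And>z. f z \<noteq> \<infinity>" and w: "w \<in> edom f"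
    and gain: "f w + ereal (\<delta> * r) \<le> f (w + r *\<^sub>R g)" and "0 \<le> s" "s \<le> r"
  shows "f w + ereal (\<delta> * s) \<le> f (w + s *\<^sub>R g)"
proof -
  obtain W where W: "f w = ereal W" using edom_finiteE[OF w npinf] .
  consider "s = 0" | "s = r" | "0 < s" "s < r" using \<open>0 \<le> s\<close> \<open>s \<le> r\<close> by linarith
  then show ?thesis
  proof cases
    case 3
    obtain R where R: "f (w + r *\<^sub>R g) = ereal R" "W + \<delta> * r \<le> R"
      using gain W npinf by (auto elim: ereal_lower_boundedE)
    define l where "l = s / r"
    have l: "0 < l" "l < 1" "l * r = s" unfolding l_def using 3 by auto
    have "ereal (l * R + (1 - l) * W) \<le> f (l *\<^sub>R (w + r *\<^sub>R g) + (1 - l) *\<^sub>R w)"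
      by (rule ext_concaveD[OF conc R(1) W l(1,2)])
    also have "l *\<^sub>R (w + r *\<^sub>R g) + (1 - l) *\<^sub>R w = w + s *\<^sub>R g"
      using l(3) by (simp add: algebra_simps)
    finally have "ereal (l * R + (1 - l) * W) \<le> f (w + s *\<^sub>R g)" .
    moreover have "l * (W + \<delta> * r) \<le> l * R" using R(2) l by simp
    then have "W + \<delta> * s \<le> l * R + (1 - l) * W" using l(3) by (simp add: algebra_simps)
    ultimately have "ereal (W + \<delta> * s) \<le> f (w + s *\<^sub>R g)" by (meson ereal_less_eq(3) order_trans)
    then show ?thesis using W by simp
  qed (use W gain in auto)
qed

lemma ext_concave_ge_near_endpoint:
  assumes conc: "ext_concave f" and A: "f a = ereal A" and B: "f b = ereal B" and "C < A"
  obtains l where "0 < l" "l < 1" "ereal C \<le> f (l *\<^sub>R b + (1 - l) *\<^sub>R a)"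
proof -
  obtain l where l: "0 < l" "l < 1" "C \<le> l * B + (1 - l) * A"
  proof (cases "C \<le> B")
    case True
    then show ?thesis using that[of "1/2"] \<open>C < A\<close> by simp
  next
    case False
    define l where "l = (A - C) / (A - B)"
    have "0 < l" "l < 1" unfolding l_def using False \<open>C < A\<close> by (auto simp: field_simps)
    moreover have "l * (A - B) = A - C" unfolding l_def using False \<open>C < A\<close> by simp
    then have "l * B + (1 - l) * A = C" by (simp add: algebra_simps)
    ultimately show ?thesis using that[of l] by simp
  qed
  then show ?thesis using ext_concaveD[OF conc B A l(1,2)] that by (meson ereal_less_eq(3) order_trans)
qed

section \<open>Recession directions\<close>

lemma closed_convex_ray_translate:
  fixes S :: "'a::real_normed_vector set"
  assumes "closed S" "convex S" "b \<in> S" and ray: "\<And>t. 0 \<le> t \<Longrightarrow> a + t *\<^sub>R d \<in> S"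
    and "0 \<le> t"
  shows "b + t *\<^sub>R d \<in> S"
proof -
  define l where "l n = inverse (real (Suc n))" for n
  have l: "0 < l n" "l n \<le> 1" for n unfolding l_def by (auto simp: field_simps)
  have mem: "b + t *\<^sub>R d + l n *\<^sub>R (a - b) \<in> S" for n
  proof -
    have eq: "b + t *\<^sub>R d + l n *\<^sub>R (a - b) = (1 - l n) *\<^sub>R b + l n *\<^sub>R (a + (t / l n) *\<^sub>R d)"
      using l[of n] by (simp add: algebra_simps)
    show ?thesis unfolding eq
      using l[of n] \<open>0 \<le> t\<close> by (intro convexD_alt[OF \<open>convex S\<close> \<open>b \<in> S\<close> ray]) auto
  qed
  have "(\<lambda>n. b + t *\<^sub>R d + l n *\<^sub>R (a - b)) \<longlonglongrightarrow> b + t *\<^sub>R d"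
    using tendsto_add[OF tendsto_const tendsto_scaleR[OF LIMSEQ_inverse_real_of_nat tendsto_const]]
    unfolding l_def by simp
  then show ?thesis by (rule closed_sequentially[OF \<open>closed S\<close> mem])
qed

lemma unbounded_closed_convex_contains_ray:
  fixes S :: "'a::{real_normed_vector, heine_borel} set"
  assumes "closed S" "convex S" "a \<in> S" "\<not> bounded S"
  obtains d where "d \<noteq> 0" "\<And>t. 0 \<le> t \<Longrightarrow> a + t *\<^sub>R d \<in> S"
proof -
  have "\<forall>n. \<exists>z. z \<in> S \<and> real n < norm (z - a)"
  proof
    fix n
    obtain z where "z \<in> S" "\<not> dist a z \<le> real n"
      using \<open>\<not> bounded S\<close> unfolding bounded_any_center[of _ a] by blast
    then show "\<exists>z. z \<in> S \<and> real n < norm (z - a)" by (auto simp: dist_norm norm_minus_commute)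
  qed
  then obtain z where z: "\<And>n. z n \<in> S" "\<And>n. real n < norm (z n - a)" by metis
  define N where "N n = norm (z n - a)" for n
  have N: "0 < N n" for n using z(2)[of n] unfolding N_def by (metis of_nat_0_le_iff le_less_trans)
  define e where "e n = (1 / N n) *\<^sub>R (z n - a)" for n
  have norm_e: "norm (e n) = 1" for n using N[of n] unfolding e_def N_def by simp
  then have "bounded (range e)" by (auto simp: bounded_iff)
  then obtain d \<phi> where \<phi>: "strict_mono \<phi>" and lim: "(e \<circ> \<phi>) \<longlonglongrightarrow> d"
    using bounded_imp_convergent_subsequence by blast
  have "(\<lambda>n. norm ((e \<circ> \<phi>) n)) \<longlonglongrightarrow> norm d" by (intro tendsto_intros lim)
  then have "norm d = 1" using norm_e by (simp add: o_def LIMSEQ_const_iff)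
  have "a + t *\<^sub>R d \<in> S" if "0 \<le> t" for t
  proof (rule Lim_in_closed_set[OF \<open>closed S\<close> _ _ tendsto_add[OF tendsto_const tendsto_scaleR[OF tendsto_const lim]]])
    obtain n0 :: nat where "t < real n0" using reals_Archimedean2 by blast
    have "a + t *\<^sub>R (e \<circ> \<phi>) n \<in> S" if "n \<ge> n0" for n
    proof -
      have "t < N (\<phi> n)"
        using \<open>t < real n0\<close> that strict_mono_imp_increasing[OF \<phi>, of n] z(2)[of "\<phi> n"]
        unfolding N_def by linarith
      then have "(1 - t / N (\<phi> n)) *\<^sub>R a + (t / N (\<phi> n)) *\<^sub>R z (\<phi> n) \<in> S"
        using N \<open>0 \<le> t\<close> by (intro convexD_alt[OF \<open>convex S\<close> \<open>a \<in> S\<close> z(1)]) auto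
      moreover have "(1 - t / N (\<phi> n)) *\<^sub>R a + (t / N (\<phi> n)) *\<^sub>R z (\<phi> n) = a + t *\<^sub>R (e \<circ> \<phi>) n"
        unfolding e_def by (simp add: algebra_simps)
      ultimately show ?thesis by simp
    qed
    then show "\<forall>\<^sub>F n in sequentially. a + t *\<^sub>R (e \<circ> \<phi>) n \<in> S"
      unfolding eventually_sequentially by blast
  qed simp
  moreover have "d \<noteq> 0" using \<open>norm d = 1\<close> by auto
  ultimately show ?thesis using that by blast
qed

lemma recession_nonneg_if_ray:
  fixes f :: "'a::real_normed_vector \<Rightarrow> ereal"
  assumes conc: "ext_concave f" and usc: "usc f" and npinf: "\<And>z. f z \<noteq> \<infinity>"
    and a: "a \<in> edom f" and ray: "\<And>t. 0 \<le> t \<Longrightarrow> f a \<le> f (a + t *\<^sub>R d)"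
  shows "0 \<le> recession f d"
proof -
  \<comment> \<open>\<open>recession\<close> is evaluated at a chosen base point \<open>b\<close>, so the ray has to be moved from \<open>a\<close> to \<open>b\<close>\<close>
  define b where "b = (SOME b. b \<in> edom f)"
  have b: "b \<in> edom f" unfolding b_def using a by (rule someI)
  obtain A where A: "f a = ereal A" using edom_finiteE[OF a npinf] .
  obtain B where B: "f b = ereal B" using edom_finiteE[OF b npinf] .
  define S where "S = {z. ereal (min A B) \<le> f z}"
  have "closed S" unfolding S_def by (rule usc_closed_superlevel[OF usc])
  have "convex S" unfolding S_def by (rule ext_concave_convex_superlevel[OF conc])
  have "a + t *\<^sub>R d \<in> S" if "0 \<le> t" for t
    using ray[OF that] A unfolding S_def by (simp add: min_le_iff_disj)
  moreover have "b \<in> S" using B unfolding S_def by (simp add: min_le_iff_disj)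
  ultimately have "b + t *\<^sub>R d \<in> S" if "0 \<le> t" for t
    using closed_convex_ray_translate[OF \<open>closed S\<close> \<open>convex S\<close>] that by blast
  then have mono_b: "f b \<le> f (b + \<alpha> *\<^sub>R d)" if "0 < \<alpha>" for \<alpha>
    using that unfolding S_def
    by (intro ext_concave_ray_bounded_below_imp_le[OF conc npinf b, of "min A B"]) simp
  have "0 \<le> (f (b + \<alpha> *\<^sub>R d) - f b) / ereal \<alpha>" if \<alpha>: "0 < \<alpha>" for \<alpha>
  proof -
    obtain F where "f (b + \<alpha> *\<^sub>R d) = ereal F" "B \<le> F"
      using mono_b[OF \<alpha>] B npinf by (auto elim: ereal_lower_boundedE)
    then show ?thesis using B \<alpha> by simp
  qed
  then show ?thesis unfolding recession_def Let_def b_def[symmetric] by (auto intro!: INF_greatest)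
qed

lemma bounded_improving_allocations:
  fixes u :: "'i::finite \<Rightarrow> real^'j \<Rightarrow> ereal" and x0 :: "real^'j^'i"
  assumes conc: "\<And>i. ext_concave (u i)" and usc: "\<And>i. usc (u i)"
    and npinf: "\<And>i z. u i z \<noteq> \<infinity>" and dom: "\<And>i. x0 $ i \<in> edom (u i)"
    and A: "\<And>y::real^'j^'i. (\<forall>i. recession (u i) (y $ i) \<ge> 0) \<Longrightarrow> (\<Sum>i\<in>UNIV. y $ i) = 0 \<Longrightarrow> y = 0"
  shows "bounded {x. (\<Sum>i\<in>UNIV. x $ i) = (\<Sum>i\<in>UNIV. x0 $ i) \<and> (\<forall>i. u i (x0 $ i) \<le> u i (x $ i))}"
    (is "bounded ?S")
proof (rule ccontr)
  assume unbounded: "\<not> bounded ?S"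
  define U where "U i = real_of_ereal (u i (x0 $ i))" for i
  have U: "u i (x0 $ i) = ereal (U i)" for i
    using dom[of i] npinf[of i "x0 $ i"] unfolding U_def edom_def by (cases "u i (x0 $ i)") auto
  have S_eq: "?S = (\<lambda>x. \<Sum>i\<in>UNIV. x $ i) -` {\<Sum>i\<in>UNIV. x0 $ i} \<inter>
      (\<Inter>i. (\<lambda>x. x $ i) -` {z. ereal (U i) \<le> u i z})"
    by (auto simp: U)
  have "closed ((\<lambda>x. \<Sum>i\<in>UNIV. x $ i) -` {\<Sum>i\<in>UNIV. x0 $ i})"
    by (intro continuous_closed_vimage closed_singleton continuous_intros)
  moreover have "closed ((\<lambda>x. x $ i) -` {z. ereal (U i) \<le> u i z})" for i
    by (intro continuous_closed_vimage usc_closed_superlevel[OF usc] continuous_intros)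
  ultimately have closed_S: "closed ?S" unfolding S_eq by blast
  have convex_S: "convex ?S" unfolding S_eq
    by (intro convex_Int convex_INT convex_linear_vimage linear_compose_sum ballI convex_singleton
        bounded_linear.linear[OF bounded_linear_vec_nth] ext_concave_convex_superlevel[OF conc])
  have "x0 \<in> ?S" by simp
  then obtain d where "d \<noteq> 0" and ray: "\<And>t. 0 \<le> t \<Longrightarrow> x0 + t *\<^sub>R d \<in> ?S"
    using unbounded_closed_convex_contains_ray[OF closed_S convex_S _ unbounded] by blast
  have "d = 0"
  proof (rule A)
    show "\<forall>i. 0 \<le> recession (u i) (d $ i)"
      using ray by (intro allI recession_nonneg_if_ray[OF conc usc npinf dom]) auto
    show "(\<Sum>i\<in>UNIV. d $ i) = 0"
      using ray[of 1] by (simp add: sum.distrib)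
  qed
  with \<open>d \<noteq> 0\<close> show False by simp
qed

section \<open>Reservation prices and consumer surplus\<close>

definition increasing_along :: "'a::real_vector \<Rightarrow> ('a \<Rightarrow> ereal) \<Rightarrow> bool" where
  "increasing_along g f \<longleftrightarrow> (\<forall>z\<in>edom f. \<forall>r>0. f z < f (z + r *\<^sub>R g))"

lemma increasing_alongD:
  "increasing_along g f \<Longrightarrow> z \<in> edom f \<Longrightarrow> 0 < r \<Longrightarrow> f z < f (z + r *\<^sub>R g)"
  unfolding increasing_along_def by blast

lemma increasing_along_imp_le:
  assumes "increasing_along g f" "0 \<le> r"
  shows "f z \<le> f (z + r *\<^sub>R g)"
proof (cases "z \<in> edom f \<and> 0 < r")
  case True
  then show ?thesis using increasing_alongD[OF assms(1)] by (simp add: less_imp_le)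
next
  case False
  then have "f z = -\<infinity> \<or> r = 0" using assms(2) unfolding edom_def by auto
  then show ?thesis by auto
qed

lemma le_DfunI:
  assumes "f x \<le> f (x + y - r *\<^sub>R g)"
  shows "ereal r \<le> Dfun g f x y"
  unfolding Dfun_def using assms by (intro Sup_upper) blast

lemma Dfun_zero_nonneg: "0 \<le> Dfun g f x 0"
  using le_DfunI[of f x 0 0 g] by (simp add: zero_ereal_def)

lemma less_DfunD:
  assumes "increasing_along g f" "ereal r < Dfun g f x y"
  shows "f x \<le> f (x + y - r *\<^sub>R g)"
proof -
  obtain s where "r < s" and s: "f x \<le> f (x + y - s *\<^sub>R g)"
    using assms(2) unfolding Dfun_def less_Sup_iff by auto
  have "f (x + y - s *\<^sub>R g) \<le> f (x + y - s *\<^sub>R g + (s - r) *\<^sub>R g)"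
    using \<open>r < s\<close> by (intro increasing_along_imp_le[OF assms(1)]) simp
  also have "x + y - s *\<^sub>R g + (s - r) *\<^sub>R g = x + y - r *\<^sub>R g" by (simp add: algebra_simps)
  finally show ?thesis using s by simp
qed

lemma Dfun_attained:
  fixes f :: "'a::real_normed_vector \<Rightarrow> ereal"
  assumes "usc f" "increasing_along g f" "ereal r \<le> Dfun g f x y"
  shows "f x \<le> f (x + y - r *\<^sub>R g)"
proof -
  have "f x \<le> f (x + y - (r - inverse (real (Suc n))) *\<^sub>R g)" for n
  proof (rule less_DfunD[OF assms(2)])
    have "ereal (r - inverse (real (Suc n))) < ereal r" by simp
    then show "ereal (r - inverse (real (Suc n))) < Dfun g f x y" using assms(3) by (rule less_le_trans)
  qed
  moreover have lim: "(\<lambda>n. x + y - (r - inverse (real (Suc n))) *\<^sub>R g) \<longlonglongrightarrow> x + y - (r - 0) *\<^sub>R g"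
    by (intro tendsto_diff tendsto_scaleR tendsto_const LIMSEQ_inverse_real_of_nat)
  ultimately show ?thesis using usc_tendsto_ge[OF assms(1) lim] by simp
qed

lemma Dfun_less_PInf:
  assumes conc: "ext_concave f" and npinf: "\<And>z. f z \<noteq> \<infinity>" and incr: "increasing_along g f"
    and x: "x \<in> edom f"
  shows "Dfun g f x y < \<infinity>"
proof (rule ccontr)
  assume "\<not> Dfun g f x y < \<infinity>"
  then have ray: "f x \<le> f (x + y - R *\<^sub>R g)" for R
    using less_DfunD[OF incr, of R] by simp
  obtain C where C: "f x = ereal C" using edom_finiteE[OF x npinf] .
  have "x + y \<in> edom f" using edom_if_le[OF x ray[of 0]] by simp
  moreover have "ereal C \<le> f ((x + y) + R *\<^sub>R (- g))" if "0 \<le> R" for R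
    using ray[of R] C by simp
  ultimately have "f (x + y) \<le> f ((x + y) + (- g))"
    by (rule ext_concave_ray_bounded_below_imp_le[OF conc npinf])
  then have le: "f (x + y) \<le> f (x + y - g)" by simp
  have "x + y - g \<in> edom f" using edom_if_le[OF x ray[of 1]] by simp
  from increasing_alongD[OF incr this, of 1] le show False by simp
qed

lemma sum_Dfun_le_CS:
  fixes u :: "'i::finite \<Rightarrow> real^'j \<Rightarrow> ereal"
  assumes "(\<Sum>i\<in>UNIV. y $ i) = 0"
  shows "(\<Sum>i\<in>UNIV. Dfun g (u i) (x $ i) (y $ i)) \<le> CS g u x"
  unfolding CS_def using assms by (intro Sup_upper) blast

lemma CS_nonneg: "0 \<le> CS g u x"
proof -
  have "0 \<le> (\<Sum>i\<in>UNIV. Dfun g (u i) (x $ i) 0)" by (simp add: sum_nonneg Dfun_zero_nonneg)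
  also have "\<dots> \<le> CS g u x" using sum_Dfun_le_CS[of 0 g u x] by simp
  finally show ?thesis .
qed

lemma Dfun_le_of_le:
  assumes "f x \<le> f x'"
  shows "Dfun g f x' y \<le> Dfun g f x (x' - x + y)"
  unfolding Dfun_def[of g f x']
proof (rule Sup_least, clarify)
  fix r assume "f x' \<le> f (x' + y - r *\<^sub>R g)"
  moreover have "x + (x' - x + y) - r *\<^sub>R g = x' + y - r *\<^sub>R g" by simp
  ultimately show "ereal r \<le> Dfun g f x (x' - x + y)"
    using assms by (intro le_DfunI) simp
qed

lemma CS_le_of_improvement:
  fixes u :: "'i::finite \<Rightarrow> real^'j \<Rightarrow> ereal"
  assumes "(\<Sum>i\<in>UNIV. x' $ i) = (\<Sum>i\<in>UNIV. x $ i)" "\<And>i. u i (x $ i) \<le> u i (x' $ i)"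
  shows "CS g u x' \<le> CS g u x"
  unfolding CS_def[of g u x']
proof (rule Sup_least, clarify)
  fix y :: "real^'j^'i" assume y: "(\<Sum>i\<in>UNIV. y $ i) = 0"
  have "(\<Sum>i\<in>UNIV. Dfun g (u i) (x' $ i) (y $ i))
      \<le> (\<Sum>i\<in>UNIV. Dfun g (u i) (x $ i) ((x' - x + y) $ i))"
    using assms(2) by (intro sum_mono) (simp add: Dfun_le_of_le)
  also have "\<dots> \<le> CS g u x"
    using assms(1) y by (intro sum_Dfun_le_CS) (simp add: sum.distrib sum_subtractf)
  finally show "(\<Sum>i\<in>UNIV. Dfun g (u i) (x' $ i) (y $ i)) \<le> CS g u x" .
qed

section \<open>Repeated double auctions\<close>

locale double_auction =
  fixes g :: "real^'j::finite"
    and u :: "'i::finite \<Rightarrow> real^'j \<Rightarrow> ereal"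
    and x xbar :: "nat \<Rightarrow> real^'j^'i"
    and p :: "nat \<Rightarrow> real^'j"
  assumes not_pinf: "\<And>i z. u i z \<noteq> \<infinity>"
    and usc: "\<And>i. usc (u i)"
    and concave: "\<And>i. ext_concave (u i)"
    and mono_g: "\<And>i z r. z \<in> edom (u i) \<Longrightarrow> r > 0 \<Longrightarrow> u i (z + r *\<^sub>R g) > u i z"
    and A: "\<And>y::real^'j^'i. (\<forall>i. recession (u i) (y $ i) \<ge> 0) \<Longrightarrow> (\<Sum>i\<in>UNIV. y $ i) = 0 \<Longrightarrow> y = 0"
    and B: "\<And>r i. r > 0 \<Longrightarrow> \<exists>\<delta>>0. \<forall>z\<in>cball 0 r.
              u i (z + r *\<^sub>R g) \<ge> u i z + ereal (\<delta> * r)"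
    and x0_dom: "\<And>i. x 0 $ i \<in> edom (u i)"
    and xbar_feas: "\<And>t. t \<ge> 1 \<Longrightarrow> (\<Sum>i\<in>UNIV. xbar t $ i) = 0"
    and xbar_opt: "\<And>t y. t \<ge> 1 \<Longrightarrow> (\<Sum>i\<in>UNIV. y $ i) = 0 \<Longrightarrow>
              (\<Sum>i\<in>UNIV. Dfun g (u i) (x (t - 1) $ i) (y $ i))
                \<le> (\<Sum>i\<in>UNIV. Dfun g (u i) (x (t - 1) $ i) (xbar t $ i))"
    and price: "\<And>t i. t \<ge> 1 \<Longrightarrow> p t \<in> superdiff (Dfun g (u i) (x (t - 1) $ i)) (xbar t $ i)"
    and update: "\<And>t i. t \<ge> 1 \<Longrightarrow>
              x t $ i = x (t - 1) $ i + xbar t $ i - (p t \<bullet> xbar t $ i) *\<^sub>R g"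
begin

text \<open>Round \<open>t + 1\<close> starts from \<open>x t\<close>; in it agent \<open>i\<close> makes the net trade \<open>trade t i\<close> and pays
  \<open>payment t i\<close>.\<close>

abbreviation "D t i \<equiv> Dfun g (u i) (x t $ i)"
abbreviation "trade t i \<equiv> xbar (Suc t) $ i"
abbreviation "payment t i \<equiv> p (Suc t) \<bullet> xbar (Suc t) $ i"

lemma increasing_along_g: "increasing_along g (u i)"
  using mono_g unfolding increasing_along_def by blast

lemma x_Suc: "x (Suc t) $ i = x t $ i + trade t i - payment t i *\<^sub>R g"
  using update[of "Suc t" i] by simp

lemma sum_trade: "(\<Sum>i\<in>UNIV. trade t i) = 0"
  using xbar_feas[of "Suc t"] by simp

lemma sum_payment: "(\<Sum>i\<in>UNIV. payment t i) = 0"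
  using sum_trade by (simp add: inner_sum_right[symmetric])

lemma payment_le_D: "ereal (payment t i) \<le> D t i (trade t i)"
proof -
  have "p (Suc t) \<in> superdiff (D t i) (trade t i)" using price[of "Suc t" i] by simp
  then have "D t i 0 \<le> D t i (trade t i) + ereal (p (Suc t) \<bullet> (0 - trade t i))"
    unfolding superdiff_def by blast
  then have "0 \<le> D t i (trade t i) + ereal (- payment t i)"
    using Dfun_zero_nonneg[of g "u i" "x t $ i"] by simp
  then show ?thesis by (cases "D t i (trade t i)") auto
qed

lemma u_x_Suc_ge: "u i (x t $ i) \<le> u i (x (Suc t) $ i)"
  using Dfun_attained[OF usc increasing_along_g payment_le_D] by (simp add: x_Suc)

lemma u_x_mono: "s \<le> t \<Longrightarrow> u i (x s $ i) \<le> u i (x t $ i)"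
  using lift_Suc_mono_le[of "\<lambda>t. u i (x t $ i)"] u_x_Suc_ge by blast

lemma x_in_edom: "x t $ i \<in> edom (u i)"
  using edom_if_le[OF x0_dom u_x_mono] by blast

lemma sum_x: "(\<Sum>i\<in>UNIV. x t $ i) = (\<Sum>i\<in>UNIV. x 0 $ i)"
proof (induction t)
  case (Suc t)
  have "(\<Sum>i\<in>UNIV. x (Suc t) $ i)
      = (\<Sum>i\<in>UNIV. x t $ i) + (\<Sum>i\<in>UNIV. trade t i) - (\<Sum>i\<in>UNIV. payment t i) *\<^sub>R g"
    by (simp add: x_Suc sum.distrib sum_subtractf scaleR_sum_left)
  then show ?case using Suc sum_trade sum_payment by simp
qed simp

lemma bounded_x: "bounded (range x)"
proof -
  let ?S = "{z. (\<Sum>i\<in>UNIV. z $ i) = (\<Sum>i\<in>UNIV. x 0 $ i) \<and> (\<forall>i. u i (x 0 $ i) \<le> u i (z $ i))}"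
  have "bounded ?S" by (rule bounded_improving_allocations[OF concave usc not_pinf x0_dom A])
  moreover have "x t \<in> ?S" for t using sum_x[of t] u_x_mono[OF le0, of _ t] by simp
  ultimately show ?thesis by (blast intro: bounded_subset)
qed

lemma CS_x_Suc_le: "CS g u (x (Suc t)) \<le> CS g u (x t)"
  using sum_x[of "Suc t"] sum_x[of t] by (intro CS_le_of_improvement u_x_Suc_ge) simp

definition surplus :: "nat \<Rightarrow> 'i \<Rightarrow> real" where
  "surplus t i = real_of_ereal (D t i (trade t i)) - payment t i"

lemma D_trade_eq: "D t i (trade t i) = ereal (surplus t i + payment t i)"
proof -
  have "D t i (trade t i) < \<infinity>"
    by (rule Dfun_less_PInf[OF concave not_pinf increasing_along_g x_in_edom])
  with payment_le_D[of t i] show ?thesis unfolding surplus_def by (cases "D t i (trade t i)") auto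
qed

lemma surplus_nonneg: "0 \<le> surplus t i"
  using payment_le_D[of t i] unfolding D_trade_eq by simp

lemma CS_x_eq: "CS g u (x t) = ereal (\<Sum>i\<in>UNIV. surplus t i)"
proof -
  have "CS g u (x t) = (\<Sum>i\<in>UNIV. D t i (trade t i))"
  proof (rule antisym)
    show "CS g u (x t) \<le> (\<Sum>i\<in>UNIV. D t i (trade t i))"
      unfolding CS_def using xbar_opt[of "Suc t"] by (auto intro!: Sup_least)
    show "(\<Sum>i\<in>UNIV. D t i (trade t i)) \<le> CS g u (x t)"
      using sum_Dfun_le_CS[of "xbar (Suc t)"] sum_trade by simp
  qed
  also have "\<dots> = ereal ((\<Sum>i\<in>UNIV. surplus t i) + (\<Sum>i\<in>UNIV. payment t i))"
    by (simp add: D_trade_eq sum.distrib)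
  finally show ?thesis by (simp add: sum_payment)
qed

lemma surplus_sum_antimono: "s \<le> t \<Longrightarrow> (\<Sum>i\<in>UNIV. surplus t i) \<le> (\<Sum>i\<in>UNIV. surplus s i)"
  using lift_Suc_antimono_le[of "\<lambda>t. \<Sum>i\<in>UNIV. surplus t i"] CS_x_Suc_le by (simp add: CS_x_eq)

lemma surplus_le_initial: "surplus t i \<le> (\<Sum>i\<in>UNIV. surplus 0 i)"
  using member_le_sum[where f="surplus t" and i=i and A=UNIV] surplus_nonneg surplus_sum_antimono[of 0 t] by simp

definition reservation_bundle :: "nat \<Rightarrow> 'i \<Rightarrow> real^'j" where
  "reservation_bundle t i = x t $ i + trade t i - (surplus t i + payment t i) *\<^sub>R g"

lemma u_reservation_bundle_ge: "u i (x t $ i) \<le> u i (reservation_bundle t i)"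
  unfolding reservation_bundle_def by (rule Dfun_attained[OF usc increasing_along_g]) (simp add: D_trade_eq)

lemma x_Suc_eq_reservation_bundle: "x (Suc t) $ i = reservation_bundle t i + surplus t i *\<^sub>R g"
  unfolding reservation_bundle_def x_Suc by (simp add: algebra_simps)

definition util :: "'i \<Rightarrow> nat \<Rightarrow> real" where
  "util i t = real_of_ereal (u i (x t $ i))"

lemma u_x_eq_util: "u i (x t $ i) = ereal (util i t)"
  using x_in_edom[of t i] not_pinf[of i "x t $ i"] unfolding util_def edom_def
  by (cases "u i (x t $ i)") auto

lemma util_gain:
  assumes "\<forall>z\<in>cball 0 r. u i z + ereal (\<delta> * r) \<le> u i (z + r *\<^sub>R g)"
    and "norm (reservation_bundle t i) \<le> r" and "surplus t i \<le> r"
  shows "\<delta> * surplus t i \<le> util i (Suc t) - util i t"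
proof -
  let ?w = "reservation_bundle t i"
  have w: "?w \<in> edom (u i)" by (rule edom_if_le[OF x_in_edom u_reservation_bundle_ge])
  have "u i ?w + ereal (\<delta> * r) \<le> u i (?w + r *\<^sub>R g)" using assms(1,2) by simp
  then have "u i ?w + ereal (\<delta> * surplus t i) \<le> u i (?w + surplus t i *\<^sub>R g)"
    by (rule ext_concave_increment_interpolate[OF concave not_pinf w _ surplus_nonneg assms(3)])
  then have "u i ?w + ereal (\<delta> * surplus t i) \<le> u i (x (Suc t) $ i)"
    by (simp add: x_Suc_eq_reservation_bundle)
  with u_reservation_bundle_ge have "u i (x t $ i) + ereal (\<delta> * surplus t i) \<le> u i (x (Suc t) $ i)"
    by (rule order_trans[OF add_right_mono])
  then show ?thesis by (simp add: u_x_eq_util)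
qed

lemma exists_radius: "\<exists>r>0. \<forall>t i. norm (reservation_bundle t i) \<le> r \<and> surplus t i \<le> r"
proof -
  obtain M where M: "\<And>t. norm (x t) \<le> M" using bounded_x unfolding bounded_iff by blast
  define S where "S = (\<Sum>i\<in>UNIV. surplus 0 i)"
  have "0 \<le> S" unfolding S_def by (simp add: sum_nonneg surplus_nonneg)
  have "0 \<le> M" using M[of 0] norm_ge_zero order_trans by blast
  have "0 \<le> S * norm g" using \<open>0 \<le> S\<close> by simp
  have bundle_le: "norm (reservation_bundle t i) \<le> M + S * norm g" for t i
  proof -
    have "norm (reservation_bundle t i) \<le> norm (x (Suc t) $ i) + norm (surplus t i *\<^sub>R g)"
      using norm_triangle_ineq4[of "x (Suc t) $ i" "surplus t i *\<^sub>R g"]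
      by (simp add: x_Suc_eq_reservation_bundle)
    also have "\<dots> \<le> M + S * norm g"
      using Finite_Cartesian_Product.norm_nth_le[of "x (Suc t)" i] M[of "Suc t"] surplus_nonneg[of t i] surplus_le_initial[of t i]
      unfolding S_def by (intro add_mono) (auto intro: mult_right_mono)
    finally show ?thesis .
  qed
  have "norm (reservation_bundle t i) \<le> M + S * norm g + S + 1 \<and> surplus t i \<le> M + S * norm g + S + 1"
    for t i
    using bundle_le[of t i] surplus_le_initial[of t i] \<open>0 \<le> S\<close> \<open>0 \<le> M\<close> \<open>0 \<le> S * norm g\<close>
    unfolding S_def[symmetric] by linarith
  moreover have "0 < M + S * norm g + S + 1" using \<open>0 \<le> S\<close> \<open>0 \<le> M\<close> \<open>0 \<le> S * norm g\<close> by linarith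
  ultimately show ?thesis by blast
qed

lemma surplus_rate:
  assumes r: "\<And>t i. norm (reservation_bundle t i) \<le> r" "\<And>t i. surplus t i \<le> r"
    and \<delta>: "\<And>i. 0 < \<delta> i" "\<And>i. \<forall>z\<in>cball 0 r. u i z + ereal (\<delta> i * r) \<le> u i (z + r *\<^sub>R g)"
  shows "real t * (\<Sum>i\<in>UNIV. surplus t i) \<le> (\<Sum>i\<in>UNIV. (util i t - util i 0) / \<delta> i)"
proof -
  have "real t * (\<Sum>i\<in>UNIV. surplus t i) = (\<Sum>s<t. \<Sum>i\<in>UNIV. surplus t i)" by simp
  also have "\<dots> \<le> (\<Sum>s<t. \<Sum>i\<in>UNIV. surplus s i)" by (intro sum_mono surplus_sum_antimono) simp
  also have "\<dots> = (\<Sum>i\<in>UNIV. \<Sum>s<t. surplus s i)" by (rule sum.swap)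
  also have "\<dots> \<le> (\<Sum>i\<in>UNIV. \<Sum>s<t. (util i (Suc s) - util i s) / \<delta> i)"
    using util_gain[OF \<delta>(2) r] \<delta>(1) by (intro sum_mono) (simp add: field_simps)
  also have "\<dots> = (\<Sum>i\<in>UNIV. (util i t - util i 0) / \<delta> i)"
    by (simp add: sum_divide_distrib[symmetric] sum_lessThan_telescope)
  finally show ?thesis .
qed

lemma CS_rate:
  "\<exists>r>0. \<forall>\<delta>::'i \<Rightarrow> real.
      (\<forall>i. \<delta> i > 0 \<and> (\<forall>z\<in>cball 0 r. u i (z + r *\<^sub>R g) \<ge> u i z + ereal (\<delta> i * r)))
      \<longrightarrow> (\<forall>t\<ge>1. CS g u (x t) \<le>
             ereal (1 / real t) * (\<Sum>i\<in>UNIV. (u i (x t $ i) - u i (x 0 $ i)) / ereal (\<delta> i)))"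
proof -
  obtain r where "r > 0" and r: "\<And>t i. norm (reservation_bundle t i) \<le> r" "\<And>t i. surplus t i \<le> r"
    using exists_radius by blast
  have "CS g u (x t) \<le> ereal (1 / real t) * (\<Sum>i\<in>UNIV. (u i (x t $ i) - u i (x 0 $ i)) / ereal (\<delta> i))"
    if \<delta>: "\<forall>i. \<delta> i > 0 \<and> (\<forall>z\<in>cball 0 r. u i (z + r *\<^sub>R g) \<ge> u i z + ereal (\<delta> i * r))"
      and "1 \<le> t" for \<delta> t
  proof -
    have "real t * (\<Sum>i\<in>UNIV. surplus t i) \<le> (\<Sum>i\<in>UNIV. (util i t - util i 0) / \<delta> i)"
      using \<delta> by (intro surplus_rate[OF r]) auto
    then have "(\<Sum>i\<in>UNIV. surplus t i) \<le> 1 / real t * (\<Sum>i\<in>UNIV. (util i t - util i 0) / \<delta> i)"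
      using \<open>1 \<le> t\<close> by (simp add: field_simps)
    moreover have "(\<Sum>i\<in>UNIV. (u i (x t $ i) - u i (x 0 $ i)) / ereal (\<delta> i))
        = ereal (\<Sum>i\<in>UNIV. (util i t - util i 0) / \<delta> i)"
      using \<delta> by (simp add: u_x_eq_util less_imp_neq[symmetric])
    ultimately show ?thesis by (simp add: CS_x_eq)
  qed
  with \<open>r > 0\<close> show ?thesis by blast
qed

lemma u_x_le_cluster:
  assumes "strict_mono \<sigma>" "(x \<circ> \<sigma>) \<longlonglongrightarrow> xc"
  shows "u i (x t $ i) \<le> u i (xc $ i)"
proof (rule usc_tendsto_ge[OF usc])
  show "(\<lambda>n. (x \<circ> \<sigma>) n $ i) \<longlonglongrightarrow> xc $ i" by (intro tendsto_intros assms(2))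
  have "t \<le> \<sigma> n" if "t \<le> n" for n using strict_mono_imp_increasing[OF assms(1), of n] that by simp
  then show "eventually (\<lambda>n. u i (x t $ i) \<le> u i ((x \<circ> \<sigma>) n $ i)) sequentially"
    unfolding eventually_sequentially by (auto intro: u_x_mono)
qed

lemma sum_cluster:
  assumes "(x \<circ> \<sigma>) \<longlonglongrightarrow> xc"
  shows "(\<Sum>i\<in>UNIV. xc $ i) = (\<Sum>i\<in>UNIV. x 0 $ i)"
proof -
  have "(\<lambda>n. \<Sum>i\<in>UNIV. (x \<circ> \<sigma>) n $ i) \<longlonglongrightarrow> (\<Sum>i\<in>UNIV. xc $ i)" by (intro tendsto_intros assms)
  moreover have "(\<Sum>i\<in>UNIV. (x \<circ> \<sigma>) n $ i) = (\<Sum>i\<in>UNIV. x 0 $ i)" for n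
    using sum_x[of "\<sigma> n"] by simp
  ultimately show ?thesis by (simp add: LIMSEQ_const_iff)
qed

lemma CS_tendsto_0: "(\<lambda>t. CS g u (x t)) \<longlonglongrightarrow> 0"
proof -
  obtain r where "r > 0" and r: "\<And>t i. norm (reservation_bundle t i) \<le> r" "\<And>t i. surplus t i \<le> r"
    using exists_radius by blast
  obtain \<delta> where \<delta>: "\<And>i. 0 < \<delta> i" "\<And>i. \<forall>z\<in>cball 0 r. u i z + ereal (\<delta> i * r) \<le> u i (z + r *\<^sub>R g)"
    using B[OF \<open>r > 0\<close>] by metis
  obtain xc \<sigma> where \<sigma>: "strict_mono \<sigma>" "(x \<circ> \<sigma>) \<longlonglongrightarrow> xc"
    using bounded_imp_convergent_subsequence[OF bounded_x] by blast
  define K where "K = (\<Sum>i\<in>UNIV. (real_of_ereal (u i (xc $ i)) - util i 0) / \<delta> i)"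
  have util_le: "util i t \<le> real_of_ereal (u i (xc $ i))" for i t
    using u_x_le_cluster[OF \<sigma>, of i t] not_pinf[of i "xc $ i"]
    by (auto simp: u_x_eq_util elim: ereal_lower_boundedE)
  have bound: "(\<Sum>i\<in>UNIV. surplus t i) \<le> K / real t" if "1 \<le> t" for t
  proof -
    have "real t * (\<Sum>i\<in>UNIV. surplus t i) \<le> (\<Sum>i\<in>UNIV. (util i t - util i 0) / \<delta> i)"
      by (rule surplus_rate[OF r \<delta>])
    also have "\<dots> \<le> K"
      unfolding K_def using \<delta>(1) by (intro sum_mono divide_right_mono) (simp_all add: util_le less_imp_le)
    finally show ?thesis using that by (simp add: field_simps)
  qed
  have "(\<lambda>t. \<Sum>i\<in>UNIV. surplus t i) \<longlonglongrightarrow> 0"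
  proof (rule tendsto_sandwich[OF _ _ tendsto_const])
    show "eventually (\<lambda>t. 0 \<le> (\<Sum>i\<in>UNIV. surplus t i)) sequentially"
      by (simp add: sum_nonneg surplus_nonneg)
    show "eventually (\<lambda>t. (\<Sum>i\<in>UNIV. surplus t i) \<le> K / real t) sequentially"
      using bound unfolding eventually_sequentially by blast
    show "(\<lambda>t. K / real t) \<longlonglongrightarrow> 0"
      by (rule tendsto_divide_0[OF tendsto_const filterlim_at_top_imp_at_infinity[OF filterlim_real_sequentially]])
  qed
  then show ?thesis by (simp add: CS_x_eq zero_ereal_def)
qed

lemma cluster_DA_equilibrium:
  assumes "strict_mono \<sigma>" "(x \<circ> \<sigma>) \<longlonglongrightarrow> xc"
  shows "DA_equilibrium g u xc"
proof -
  have "CS g u xc \<le> CS g u (x t)" for t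
    using sum_cluster[OF assms(2)] sum_x[of t] by (intro CS_le_of_improvement u_x_le_cluster[OF assms]) simp
  then have "CS g u xc \<le> 0" by (intro LIMSEQ_le_const[OF CS_tendsto_0]) auto
  with CS_nonneg show ?thesis unfolding DA_equilibrium_def by (rule antisym[rotated])
qed

lemma cluster_pareto_efficient:
  assumes H: "\<forall>i yi. (\<exists>y'\<in>edom (u i). u i yi > u i y') \<longrightarrow>
            (\<exists>e0>0. \<forall>e. 0 < e \<and> e < e0 \<longrightarrow> yi - e *\<^sub>R g \<in> edom (u i))"
    and cl: "strict_mono \<sigma>" "(x \<circ> \<sigma>) \<longlonglongrightarrow> xc"
  shows "pareto_efficient u (x 0) xc"
  unfolding pareto_efficient_def feasible_def
proof (intro conjI notI)
  show sum_xc: "(\<Sum>i\<in>UNIV. xc $ i) = (\<Sum>i\<in>UNIV. x 0 $ i)" by (rule sum_cluster[OF cl(2)])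
  assume "\<exists>x'. (\<Sum>i\<in>UNIV. x' $ i) = (\<Sum>i\<in>UNIV. x 0 $ i) \<and> (\<forall>i. u i (xc $ i) \<le> u i (x' $ i))
    \<and> (\<exists>i. u i (xc $ i) < u i (x' $ i))"
  then obtain x' k where x': "(\<Sum>i\<in>UNIV. x' $ i) = (\<Sum>i\<in>UNIV. x 0 $ i)"
      "\<And>i. u i (xc $ i) \<le> u i (x' $ i)" "u k (xc $ k) < u k (x' $ k)"
    by blast
  define y where "y = x' - xc"
  have y: "(\<Sum>i\<in>UNIV. y $ i) = 0" using x'(1) sum_xc by (simp add: y_def sum_subtractf)
  have xc_dom: "xc $ i \<in> edom (u i)" for i by (rule edom_if_le[OF x_in_edom u_x_le_cluster[OF cl]])
  obtain C where C: "u k (xc $ k) = ereal C" using edom_finiteE[OF xc_dom not_pinf] .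
  obtain X where X: "u k (x' $ k) = ereal X" and "C < X"
    using x'(3) C not_pinf[of k "x' $ k"] by (cases "u k (x' $ k)") auto
  obtain e0 where "0 < e0" and e0: "\<And>e. 0 < e \<and> e < e0 \<Longrightarrow> x' $ k - e *\<^sub>R g \<in> edom (u k)"
    using H xc_dom x'(3) by blast
  define e where "e = e0 / 2"
  have "0 < e" and e: "x' $ k - e *\<^sub>R g \<in> edom (u k)" using \<open>0 < e0\<close> e0 unfolding e_def by auto
  obtain W where W: "u k (x' $ k - e *\<^sub>R g) = ereal W" using edom_finiteE[OF e not_pinf] .
  obtain l where "0 < l" "l < 1" and l: "ereal C \<le> u k (l *\<^sub>R (x' $ k - e *\<^sub>R g) + (1 - l) *\<^sub>R x' $ k)"
    using ext_concave_ge_near_endpoint[OF concave X W \<open>C < X\<close>] by blast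
  have "l *\<^sub>R (x' $ k - e *\<^sub>R g) + (1 - l) *\<^sub>R x' $ k = xc $ k + y $ k - (l * e) *\<^sub>R g"
    by (simp add: y_def algebra_simps)
  with l C have "ereal (l * e) \<le> Dfun g (u k) (xc $ k) (y $ k)" by (intro le_DfunI) simp
  also have "\<dots> \<le> Dfun g (u k) (xc $ k) (y $ k) + (\<Sum>i\<in>UNIV - {k}. Dfun g (u i) (xc $ i) (y $ i))"
    using x'(2) le_DfunI[of "u _" "xc $ _" "y $ _" 0 g]
    by (intro add_increasing2 sum_nonneg) (simp_all add: y_def zero_ereal_def)
  also have "\<dots> = (\<Sum>i\<in>UNIV. Dfun g (u i) (xc $ i) (y $ i))" by (simp add: sum.remove)
  also have "\<dots> \<le> CS g u xc" by (rule sum_Dfun_le_CS[OF y])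
  also have "\<dots> = 0" using cluster_DA_equilibrium[OF cl] unfolding DA_equilibrium_def .
  finally show False using mult_pos_pos[OF \<open>0 < l\<close> \<open>0 < e\<close>] by simp
qed

end

theorem theorem6p3:
  fixes g :: "real^'j::finite"
    and u :: "'i::finite \<Rightarrow> real^'j \<Rightarrow> ereal"
    and x xbar :: "nat \<Rightarrow> real^'j^'i"
    and p :: "nat \<Rightarrow> real^'j"
  assumes not_pinf: "\<And>i z. u i z \<noteq> \<infinity>"
    and usc: "\<And>i. usc (u i)"
    and concave: "\<And>i. ext_concave (u i)"
    and mono_g: "\<And>i z r. z \<in> edom (u i) \<Longrightarrow> r > 0 \<Longrightarrow> u i (z + r *\<^sub>R g) > u i z"
    and A: "\<And>y::real^'j^'i. (\<forall>i. recession (u i) (y $ i) \<ge> 0) \<Longrightarrow> (\<Sum>i\<in>UNIV. y $ i) = 0 \<Longrightarrow> y = 0"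
    and B: "\<And>r i. r > 0 \<Longrightarrow> \<exists>\<delta>>0. \<forall>z\<in>cball 0 r.
              u i (z + r *\<^sub>R g) \<ge> u i z + ereal (\<delta> * r)"
    and x0_dom: "\<And>i. x 0 $ i \<in> edom (u i)"
    and xbar_feas: "\<And>t. t \<ge> 1 \<Longrightarrow> (\<Sum>i\<in>UNIV. xbar t $ i) = 0"
    and xbar_opt: "\<And>t y. t \<ge> 1 \<Longrightarrow> (\<Sum>i\<in>UNIV. y $ i) = 0 \<Longrightarrow>
              (\<Sum>i\<in>UNIV. Dfun g (u i) (x (t - 1) $ i) (y $ i))
                \<le> (\<Sum>i\<in>UNIV. Dfun g (u i) (x (t - 1) $ i) (xbar t $ i))"
    and price: "\<And>t i. t \<ge> 1 \<Longrightarrow> p t \<in> superdiff (Dfun g (u i) (x (t - 1) $ i)) (xbar t $ i)"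
    and update: "\<And>t i. t \<ge> 1 \<Longrightarrow>
              x t $ i = x (t - 1) $ i + xbar t $ i - (p t \<bullet> xbar t $ i) *\<^sub>R g"
  shows "bounded (range x)
    \<and> (\<forall>t. CS g u (x (Suc t)) \<le> CS g u (x t))
    \<and> (\<lambda>t. CS g u (x t)) \<longlonglongrightarrow> 0
    \<and> (\<exists>r>0. \<forall>\<delta>::'i \<Rightarrow> real.
          (\<forall>i. \<delta> i > 0 \<and> (\<forall>z\<in>cball 0 r. u i (z + r *\<^sub>R g) \<ge> u i z + ereal (\<delta> i * r)))
          \<longrightarrow> (\<forall>t\<ge>1. CS g u (x t) \<le>
                 ereal (1 / real t) * (\<Sum>i\<in>UNIV. (u i (x t $ i) - u i (x 0 $ i)) / ereal (\<delta> i))))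
    \<and> (\<forall>xb. (\<exists>\<sigma>. strict_mono \<sigma> \<and> (x \<circ> \<sigma>) \<longlonglongrightarrow> xb) \<longrightarrow>
          DA_equilibrium g u xb \<and> indiv_rational u (x 0) xb)
    \<and> ((\<forall>i yi. (\<exists>y'\<in>edom (u i). u i yi > u i y') \<longrightarrow>
            (\<exists>e0>0. \<forall>e. 0 < e \<and> e < e0 \<longrightarrow> yi - e *\<^sub>R g \<in> edom (u i)))
       \<longrightarrow> (\<forall>xb. (\<exists>\<sigma>. strict_mono \<sigma> \<and> (x \<circ> \<sigma>) \<longlonglongrightarrow> xb) \<longrightarrow>
              pareto_efficient u (x 0) xb))"
proof -
  interpret double_auction g u x xbar p
    by unfold_locales (fact not_pinf usc concave mono_g A B x0_dom xbar_feas xbar_opt price update)+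
  have "DA_equilibrium g u xb \<and> indiv_rational u (x 0) xb"
    if "strict_mono \<sigma>" "(x \<circ> \<sigma>) \<longlonglongrightarrow> xb" for \<sigma> xb
    using cluster_DA_equilibrium[OF that] u_x_le_cluster[OF that, of _ 0]
    unfolding indiv_rational_def by blast
  then show ?thesis
    using bounded_x CS_x_Suc_le CS_tendsto_0 CS_rate cluster_pareto_efficient by blast
qed

end
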